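(* Let $a,b,d>0$ and $c>c_-$, and let $\phi(x)=\frac{ax^3+bx^2+cx+d}{x^3}$, $x>0$. \begin{description} \item[(a)] If $\phi$ has a unique positive equilibrium $\overline{t}$, then $(\phi(t)-t)(t-\overline{t})<0$ for all $t>0$, $t\neq\overline{t}$. \item[(b)] If $\phi$ has two equilibria $\overline{t}_1<\overline{t}_2$, then for $c=c_M$ $$(\phi(t)-t)(t-\overline{t}_2)<0,\quad t>0,\ t\neq\overline{t}_1,\overline{t}_2,$$ and for $c=c_m$ $$(\phi(t)-t)(t-\overline{t}_1)<0,\quad t>0,\ t\neq\overline{t}_1,\overline{t}_2.$$ \item[(c)] If $\phi$ has three equilibria $\overline{t}_1<\overline{t}_2<\overline{t}_3$, then $$(\phi(t)-t)(t-\overline{t}_1)(t-\overline{t}_2)(t-\overline{t}_3)<0,\quad t>0,\ t\neq\overline{t}_1,\overline{t}_2,\overline{t}_3.$$ \end{description}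
   Context: $c_-$ is the unique negative zero of $Q(x)=4ax^3-b^2x^2-18abd\,x+27a^2d^2+4db^3$; the standing assumption $c>c_-$ guarantees that iterates of $\phi$ from positive points remain positive. Equilibria are points $t>0$ with $\phi(t)=t$, equivalently positive roots of $P(t)=t^4-at^3-bt^2-ct-d$. Let $c^*=-\sqrt{3bd}$ and let $c_b$ be the unique negative root of $H(x)=108x^2+(108ab+27a^3)x-9a^2b^2-32b^3$. When $c_b<\frac{b^2-12d}{3a}$, as the parameter $c$ increases from $c_b$ (with $a,b,d$ fixed), $P$ first acquires a positive double root $t_m$ located at a local minimum of $P$, and later a positive double root $t_M$ located at a local maximum of $P$; $c_m$ and $c_M$ denote the corresponding values of $c$ (one has $c_b<c_m<c_M<c^*$). Two equilibria occur only for $c=c_m$ or $c=c_M$ with $c\in(c_-,c^* )$. *)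

theory Defs
  imports Complex_Main
begin

definition phi :: "real \<Rightarrow> real \<Rightarrow> real \<Rightarrow> real \<Rightarrow> real \<Rightarrow> real" where
  "phi a b c d x = (a*x^3 + b*x^2 + c*x + d) / x^3"

definition Qpoly :: "real \<Rightarrow> real \<Rightarrow> real \<Rightarrow> real \<Rightarrow> real" where
  "Qpoly a b d x = 4*a*x^3 - b^2*x^2 - 18*a*b*d*x + 27*a^2*d^2 + 4*d*b^3"

definition c_minus :: "real \<Rightarrow> real \<Rightarrow> real \<Rightarrow> real" where
  "c_minus a b d = (THE x. x < 0 \<and> Qpoly a b d x = 0)"

definition Ppoly :: "real \<Rightarrow> real \<Rightarrow> real \<Rightarrow> real \<Rightarrow> real \<Rightarrow> real" where
  "Ppoly a b c d t = t^4 - a*t^3 - b*t^2 - c*t - d"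

definition equilibria :: "real \<Rightarrow> real \<Rightarrow> real \<Rightarrow> real \<Rightarrow> real set" where
  "equilibria a b c d = {t. t > 0 \<and> phi a b c d t = t}"

definition is_c_m :: "real \<Rightarrow> real \<Rightarrow> real \<Rightarrow> real \<Rightarrow> bool" where
  "is_c_m a b c d \<longleftrightarrow> (\<exists>t>0. Ppoly a b c d t = 0 \<and>
      4*t^3 - 3*a*t^2 - 2*b*t - c = 0 \<and>
      (\<exists>e>0. \<forall>s. \<bar>s - t\<bar> < e \<longrightarrow> Ppoly a b c d t \<le> Ppoly a b c d s))"

definition is_c_M :: "real \<Rightarrow> real \<Rightarrow> real \<Rightarrow> real \<Rightarrow> bool" where
  "is_c_M a b c d \<longleftrightarrow> (\<exists>t>0. Ppoly a b c d t = 0 \<and>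
      4*t^3 - 3*a*t^2 - 2*b*t - c = 0 \<and>
      (\<exists>e>0. \<forall>s. \<bar>s - t\<bar> < e \<longrightarrow> Ppoly a b c d s \<le> Ppoly a b c d t))"

end

theory Submission
  imports Defs "HOL-Real_Asymp.Real_Asymp"
begin

text \<open>For \<open>t > 0\<close> we have \<open>\<phi>(t) - t = -P(t)/t\<^sup>3\<close>, so every claim is a sign statement about
  the quartic \<open>P\<close> on \<open>(0,\<infinity>)\<close>. As \<open>P(0) = -d < 0\<close> and \<open>P(t) \<rightarrow> \<infinity>\<close>, a unique positive zero
  is a sign change of \<open>P\<close>. Two distinct positive zeros \<open>t\<^sub>1, t\<^sub>2\<close> split off a monic quadratic
  factor whose value at 0 is \<open>-d/(t\<^sub>1t\<^sub>2) < 0\<close>; hence \<open>P = (t-t\<^sub>1)(t-t\<^sub>2)(t-s)(t-r)\<close> with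
  \<open>r < 0 < s\<close>. Either \<open>s\<close> is a third equilibrium, and the sign of \<open>P\<close> is that of
  \<open>(t-t\<^sub>1)(t-t\<^sub>2)(t-t\<^sub>3)\<close>, or \<open>s\<close> doubles one of \<open>t\<^sub>1, t\<^sub>2\<close>: a double root at \<open>t\<^sub>1\<close> is a local
  maximum of \<open>P\<close> (so \<open>c = c\<^sub>M\<close>), one at \<open>t\<^sub>2\<close> a local minimum (so \<open>c = c\<^sub>m\<close>).\<close>

lemma phi_minus_self:
  assumes "t > 0"
  shows "phi a b c d t - t = - Ppoly a b c d t / t^3"
  using assms unfolding phi_def Ppoly_def by (simp add: field_simps power_def)

lemma phi_minus_self_mult_neg_iff:
  assumes "t > 0"
  shows "(phi a b c d t - t) * y < 0 \<longleftrightarrow> Ppoly a b c d t * y > 0"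
proof -
  have "(phi a b c d t - t) * y = - (Ppoly a b c d t * y) / t^3"
    using phi_minus_self[OF assms] by simp
  moreover have "t^3 > 0" using assms by simp
  ultimately show ?thesis by (simp add: zero_less_divide_iff)
qed

lemma mem_equilibria_iff: "t \<in> equilibria a b c d \<longleftrightarrow> t > 0 \<and> Ppoly a b c d t = 0"
proof -
  have "phi a b c d t = t \<longleftrightarrow> Ppoly a b c d t = 0" if "t > 0"
    using phi_minus_self[OF that, of a b c d] that by (auto simp: field_simps)
  then show ?thesis unfolding equilibria_def by auto
qed

lemma continuous_on_no_zero_sign_eq:
  fixes f :: "real \<Rightarrow> real"
  assumes "continuous_on {u..v} f" "u \<le> v" "\<And>x. u \<le> x \<Longrightarrow> x \<le> v \<Longrightarrow> f x \<noteq> 0"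
  shows "f u < 0 \<longleftrightarrow> f v < 0"
proof
  assume "f u < 0"
  show "f v < 0"
  proof (rule ccontr)
    assume "\<not> f v < 0"
    then obtain x where "u \<le> x" "x \<le> v" "f x = 0"
      using IVT'[of f u 0 v] \<open>f u < 0\<close> assms(1,2) by force
    with assms(3) show False by blast
  qed
next
  assume "f v < 0"
  show "f u < 0"
  proof (rule ccontr)
    assume "\<not> f u < 0"
    then obtain x where "u \<le> x" "x \<le> v" "f x = 0"
      using IVT2'[of f v 0 u] \<open>f v < 0\<close> assms(1,2) by force
    with assms(3) show False by blast
  qed
qed

lemma continuous_on_Ppoly: "continuous_on S (\<lambda>x. Ppoly a b c d x)"
  unfolding Ppoly_def by (intro continuous_intros)

lemma eventually_Ppoly_pos: "eventually (\<lambda>x. Ppoly a b c d x > 0) at_top"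
  unfolding Ppoly_def by real_asymp

lemma Ppoly_sign_unique_pos_root:
  assumes "d > 0" and roots: "\<And>x. x > 0 \<Longrightarrow> Ppoly a b c d x = 0 \<longleftrightarrow> x = tb"
    and "t > 0" "t \<noteq> tb"
  shows "Ppoly a b c d t * (t - tb) > 0"
proof (cases "t < tb")
  case True
  have P0: "Ppoly a b c d 0 < 0" using \<open>d > 0\<close> by (simp add: Ppoly_def)
  have "Ppoly a b c d x \<noteq> 0" if "0 \<le> x" "x \<le> t" for x
    using P0 roots[of x] that True by (cases "x = 0") auto
  then have "Ppoly a b c d 0 < 0 \<longleftrightarrow> Ppoly a b c d t < 0"
    using \<open>t > 0\<close> by (intro continuous_on_no_zero_sign_eq continuous_on_Ppoly) auto
  moreover note P0
  ultimately show ?thesis using True by (simp add: mult_neg_neg)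
next
  case False
  obtain N where N: "\<And>x. x \<ge> N \<Longrightarrow> Ppoly a b c d x > 0"
    using eventually_Ppoly_pos[of a b c d] by (auto simp: eventually_at_top_linorder)
  define M where "M = max N t"
  have "Ppoly a b c d t < 0 \<longleftrightarrow> Ppoly a b c d M < 0"
    using assms False unfolding M_def
    by (intro continuous_on_no_zero_sign_eq continuous_on_Ppoly) auto
  moreover have "Ppoly a b c d M > 0" using N unfolding M_def by simp
  moreover have "Ppoly a b c d t \<noteq> 0" using assms by blast
  ultimately show ?thesis using False \<open>t \<noteq> tb\<close> by simp
qed

lemma Ppoly_factor_two_roots:
  assumes "Ppoly a b c d t1 = 0" "Ppoly a b c d t2 = 0" "t1 \<noteq> t2"
  shows "Ppoly a b c d x = (x - t1) * (x - t2) *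
    (x^2 + (t1 + t2 - a) * x + (t1^2 + t1*t2 + t2^2 - a*(t1 + t2) - b))"
proof -
  txt \<open>The remainder of the division by \<open>(x - t\<^sub>1)(x - t\<^sub>2)\<close> is the linear interpolant of \<open>P\<close>
    at \<open>t\<^sub>1, t\<^sub>2\<close>.\<close>
  have "(t1 - t2) * (Ppoly a b c d x - (x - t1) * (x - t2) *
      (x^2 + (t1 + t2 - a) * x + (t1^2 + t1*t2 + t2^2 - a*(t1 + t2) - b)))
    = (x - t2) * Ppoly a b c d t1 - (x - t1) * Ppoly a b c d t2"
    unfolding Ppoly_def by algebra
  with assms show ?thesis by simp
qed

lemma quadratic_pos_root:
  fixes p q :: real
  assumes "q < 0"
  obtains s where "s > 0" "s^2 + p*s + q = 0"
proof
  define D where "D = sqrt (p^2 - 4*q)"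
  have "p^2 - 4*q \<ge> 0" using assms zero_le_power2[of p] by linarith
  then have D2: "D^2 = p^2 - 4*q" unfolding D_def by simp
  have "\<bar>p\<bar> = sqrt (p^2)" by simp
  also have "\<dots> < D" unfolding D_def using assms by (intro real_sqrt_less_mono) simp
  finally show "(D - p) / 2 > 0" by simp
  show "((D - p) / 2)^2 + p * ((D - p) / 2) + q = 0"
    using D2 by (simp add: field_simps power2_eq_square)
qed

lemma Ppoly_factor_two_pos_roots:
  assumes "d > 0" "t1 > 0" "t2 > 0" "t1 \<noteq> t2" "Ppoly a b c d t1 = 0" "Ppoly a b c d t2 = 0"
  obtains s r where "s > 0" "r < 0"
    "\<And>x. Ppoly a b c d x = (x - t1) * (x - t2) * (x - s) * (x - r)"
proof -
  define p where "p = t1 + t2 - a"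
  define q where "q = t1^2 + t1*t2 + t2^2 - a*(t1 + t2) - b"
  have P: "Ppoly a b c d x = (x - t1) * (x - t2) * (x^2 + p*x + q)" for x
    unfolding p_def q_def by (rule Ppoly_factor_two_roots[OF assms(5,6,4)])
  have "t1 * t2 * q = - d" using P[of 0] by (simp add: Ppoly_def)
  have "q < 0"
  proof (rule ccontr)
    assume "\<not> q < 0"
    then have "t1 * t2 * q \<ge> 0" using assms(2,3) by simp
    with \<open>t1 * t2 * q = - d\<close> \<open>d > 0\<close> show False by simp
  qed
  then obtain s where "s > 0" and s: "s^2 + p*s + q = 0" by (rule quadratic_pos_root)
  then have q: "q = -(s^2) - p*s" by linarith
  have "Ppoly a b c d x = (x - t1) * (x - t2) * (x - s) * (x - (- p - s))" for x
    unfolding P q by (simp add: algebra_simps power2_eq_square)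
  moreover have "- p - s < 0"
  proof -
    have "s * (- p - s) = q" unfolding q by (simp add: algebra_simps power2_eq_square)
    with \<open>q < 0\<close> \<open>s > 0\<close> mult_nonneg_nonneg[of s "- p - s"] show ?thesis by linarith
  qed
  ultimately show thesis using that \<open>s > 0\<close> by blast
qed

lemma Ppoly_sign_four_factors:
  assumes "\<And>x. Ppoly a b c d x = (x - t1) * (x - t2) * (x - t3) * (x - r)"
    "r < t" "t \<noteq> t1" "t \<noteq> t2" "t \<noteq> t3"
  shows "Ppoly a b c d t * ((t - t1) * (t - t2) * (t - t3)) > 0"
proof -
  have "Ppoly a b c d t * ((t - t1) * (t - t2) * (t - t3))
      = ((t - t1) * (t - t2) * (t - t3))^2 * (t - r)"
    using assms(1) by (simp add: power2_eq_square)
  also have "\<dots> > 0" using assms(2-5) by simp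
  finally show ?thesis .
qed

lemma Ppoly_sign_double_root:
  assumes "\<And>x. Ppoly a b c d x = (x - u)^2 * (x - v) * (x - r)"
    "r < t" "t \<noteq> u" "t \<noteq> v"
  shows "Ppoly a b c d t * (t - v) > 0"
proof -
  have "Ppoly a b c d t * (t - v) = (t - u)^2 * (t - v)^2 * (t - r)"
    using assms(1) by (simp add: power2_eq_square)
  also have "\<dots> > 0" using assms(2-4) by simp
  finally show ?thesis .
qed

lemma not_is_c_m_if_neg_below:
  assumes "0 < t1" "t1 < t2"
    and zeros: "\<And>x. x > 0 \<Longrightarrow> Ppoly a b c d x = 0 \<Longrightarrow> x = t1 \<or> x = t2"
    and neg: "\<And>x. 0 < x \<Longrightarrow> x < t2 \<Longrightarrow> x \<noteq> t1 \<Longrightarrow> Ppoly a b c d x < 0"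
  shows "\<not> is_c_m a b c d"
proof
  assume "is_c_m a b c d"
  then obtain t0 e where "t0 > 0" "Ppoly a b c d t0 = 0" "e > 0"
    and min: "\<And>x. \<bar>x - t0\<bar> < e \<Longrightarrow> Ppoly a b c d t0 \<le> Ppoly a b c d x"
    unfolding is_c_m_def by blast
  then have t0: "t0 = t1 \<or> t0 = t2" using zeros by blast
  define \<delta> where "\<delta> = min e (min t1 (t2 - t1)) / 2"
  have "0 < \<delta>" "\<delta> < e" "\<delta> < t1" "\<delta> < t2 - t1"
    using assms(1,2) \<open>e > 0\<close> unfolding \<delta>_def by auto
  define x where "x = t0 - \<delta>"
  have "0 < x" "x < t2" "x \<noteq> t1" "\<bar>x - t0\<bar> < e"
    using t0 \<open>0 < \<delta>\<close> \<open>\<delta> < e\<close> \<open>\<delta> < t1\<close> \<open>\<delta> < t2 - t1\<close> unfolding x_def by auto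
  then have "Ppoly a b c d x < 0" "0 \<le> Ppoly a b c d x"
    using neg min \<open>Ppoly a b c d t0 = 0\<close> by auto
  then show False by simp
qed

lemma not_is_c_M_if_pos_above:
  assumes "t1 < t2"
    and zeros: "\<And>x. x > 0 \<Longrightarrow> Ppoly a b c d x = 0 \<Longrightarrow> x = t1 \<or> x = t2"
    and pos: "\<And>x. t1 < x \<Longrightarrow> x \<noteq> t2 \<Longrightarrow> Ppoly a b c d x > 0"
  shows "\<not> is_c_M a b c d"
proof
  assume "is_c_M a b c d"
  then obtain t0 e where "t0 > 0" "Ppoly a b c d t0 = 0" "e > 0"
    and max: "\<And>x. \<bar>x - t0\<bar> < e \<Longrightarrow> Ppoly a b c d x \<le> Ppoly a b c d t0"
    unfolding is_c_M_def by blast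
  then have t0: "t0 = t1 \<or> t0 = t2" using zeros by blast
  define \<delta> where "\<delta> = min e (t2 - t1) / 2"
  have "0 < \<delta>" "\<delta> < e" "\<delta> < t2 - t1"
    using assms(1) \<open>e > 0\<close> unfolding \<delta>_def by auto
  define x where "x = t0 + \<delta>"
  have "t1 < x" "x \<noteq> t2" "\<bar>x - t0\<bar> < e"
    using t0 \<open>0 < \<delta>\<close> \<open>\<delta> < e\<close> \<open>\<delta> < t2 - t1\<close> unfolding x_def by auto
  then have "Ppoly a b c d x > 0" "Ppoly a b c d x \<le> 0"
    using pos max \<open>Ppoly a b c d t0 = 0\<close> by auto
  then show False by simp
qed

lemma phi_sign_unique_equilibrium:
  assumes "d > 0" "equilibria a b c d = {tb}" "t > 0" "t \<noteq> tb"
  shows "(phi a b c d t - t) * (t - tb) < 0"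
proof -
  have "\<And>x. x > 0 \<Longrightarrow> Ppoly a b c d x = 0 \<longleftrightarrow> x = tb"
    using assms(2) mem_equilibria_iff by blast
  with assms show ?thesis
    by (simp add: phi_minus_self_mult_neg_iff Ppoly_sign_unique_pos_root)
qed

lemma phi_sign_two_equilibria:
  assumes "d > 0" "t1 < t2" "equilibria a b c d = {t1, t2}"
  shows "(is_c_M a b c d \<longrightarrow>
           (\<forall>t>0. t \<noteq> t1 \<and> t \<noteq> t2 \<longrightarrow> (phi a b c d t - t) * (t - t2) < 0))
      \<and> (is_c_m a b c d \<longrightarrow>
           (\<forall>t>0. t \<noteq> t1 \<and> t \<noteq> t2 \<longrightarrow> (phi a b c d t - t) * (t - t1) < 0))"
proof -
  have roots: "t1 > 0" "Ppoly a b c d t1 = 0" "t2 > 0" "Ppoly a b c d t2 = 0"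
    using assms(3) mem_equilibria_iff by blast+
  have zeros: "\<And>x. x > 0 \<Longrightarrow> Ppoly a b c d x = 0 \<Longrightarrow> x = t1 \<or> x = t2"
    using assms(3) mem_equilibria_iff by blast
  obtain s r where "s > 0" "r < 0"
    and P: "\<And>x. Ppoly a b c d x = (x - t1) * (x - t2) * (x - s) * (x - r)"
    using Ppoly_factor_two_pos_roots[OF assms(1) roots(1,3) less_imp_neq[OF assms(2)] roots(2,4)]
    by blast
  from zeros[OF \<open>s > 0\<close>] P[of s] consider "s = t1" | "s = t2" by auto
  then show ?thesis
  proof cases
    case 1
    then have D: "Ppoly a b c d x = (x - t1)^2 * (x - t2) * (x - r)" for x
      using P[of x] by (simp add: power2_eq_square mult_ac)
    have sign: "Ppoly a b c d t * (t - t2) > 0" if "t > 0" "t \<noteq> t1" "t \<noteq> t2" for t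
      using that \<open>r < 0\<close> by (intro Ppoly_sign_double_root[OF D]) auto
    have "\<not> is_c_m a b c d"
      using roots(1) assms(2) zeros
    proof (rule not_is_c_m_if_neg_below)
      show "Ppoly a b c d x < 0" if "0 < x" "x < t2" "x \<noteq> t1" for x
        using sign[of x] that by (simp add: zero_less_mult_iff)
    qed
    with sign show ?thesis by (simp add: phi_minus_self_mult_neg_iff)
  next
    case 2
    then have D: "Ppoly a b c d x = (x - t2)^2 * (x - t1) * (x - r)" for x
      using P[of x] by (simp add: power2_eq_square mult_ac)
    have sign: "Ppoly a b c d t * (t - t1) > 0" if "t > 0" "t \<noteq> t1" "t \<noteq> t2" for t
      using that \<open>r < 0\<close> by (intro Ppoly_sign_double_root[OF D]) auto
    have "\<not> is_c_M a b c d"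
      using assms(2) zeros
    proof (rule not_is_c_M_if_pos_above)
      show "Ppoly a b c d x > 0" if "t1 < x" "x \<noteq> t2" for x
        using sign[of x] that roots(1) by (simp add: zero_less_mult_iff)
    qed
    with sign show ?thesis by (simp add: phi_minus_self_mult_neg_iff)
  qed
qed

lemma phi_sign_three_equilibria:
  assumes "d > 0" "t1 < t2" "t2 < t3" "equilibria a b c d = {t1, t2, t3}"
    "t > 0" "t \<noteq> t1" "t \<noteq> t2" "t \<noteq> t3"
  shows "(phi a b c d t - t) * (t - t1) * (t - t2) * (t - t3) < 0"
proof -
  have roots: "t1 > 0" "Ppoly a b c d t1 = 0" "t2 > 0" "Ppoly a b c d t2 = 0"
      "t3 > 0" "Ppoly a b c d t3 = 0"
    using assms(4) mem_equilibria_iff by blast+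
  obtain s r where "r < 0"
    and P: "\<And>x. Ppoly a b c d x = (x - t1) * (x - t2) * (x - s) * (x - r)"
    using Ppoly_factor_two_pos_roots[OF assms(1) roots(1,3) less_imp_neq[OF assms(2)] roots(2,4)]
    by blast
  have "s = t3"
    using P[of t3] roots(5,6) assms(2,3) \<open>r < 0\<close> by auto
  with P have P3: "Ppoly a b c d x = (x - t1) * (x - t2) * (x - t3) * (x - r)" for x
    by simp
  have "Ppoly a b c d t * ((t - t1) * (t - t2) * (t - t3)) > 0"
    using assms(5-8) \<open>r < 0\<close> by (intro Ppoly_sign_four_factors[OF P3]) auto
  with assms(5) show ?thesis by (simp add: phi_minus_self_mult_neg_iff mult.assoc)
qed

theorem theorem3:
  fixes a b c d :: real
  assumes "a > 0" and "b > 0" and "d > 0" and "c > c_minus a b d"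
  shows
   "(\<forall>tb. equilibria a b c d = {tb} \<longrightarrow>
        (\<forall>t>0. t \<noteq> tb \<longrightarrow> (phi a b c d t - t) * (t - tb) < 0))
    \<and> (\<forall>t1 t2. t1 < t2 \<and> equilibria a b c d = {t1, t2} \<longrightarrow>
        (is_c_M a b c d \<longrightarrow>
           (\<forall>t>0. t \<noteq> t1 \<and> t \<noteq> t2 \<longrightarrow> (phi a b c d t - t) * (t - t2) < 0))
      \<and> (is_c_m a b c d \<longrightarrow>
           (\<forall>t>0. t \<noteq> t1 \<and> t \<noteq> t2 \<longrightarrow> (phi a b c d t - t) * (t - t1) < 0)))
    \<and> (\<forall>t1 t2 t3. t1 < t2 \<and> t2 < t3 \<and> equilibria a b c d = {t1, t2, t3} \<longrightarrow>
        (\<forall>t>0. t \<noteq> t1 \<and> t \<noteq> t2 \<and> t \<noteq> t3 \<longrightarrow>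
           (phi a b c d t - t) * (t - t1) * (t - t2) * (t - t3) < 0))"
  using \<open>d > 0\<close>
  by (intro conjI allI impI; (elim conjE)?)
     (simp_all add: phi_sign_unique_equilibrium phi_sign_two_equilibria
       phi_sign_three_equilibria)

end
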